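(* For every $\mu>0$ there exists a set $F_*\in\mathcal K$ with $|F_*|=\mu$ such that $P_S(F_* )\le P_S(F)$ for every $F\in\mathcal K$ with $|F|=\mu$.
   Context: Fix $n\ge 2$ and $s\in(0,1)$. Write $x=(x_1,x')\in\mathbb R\times\mathbb R^{n-1}$, $e_1=(1,0,\dots,0)$, and let $S:=[-1/2,1/2]\times\mathbb R^{n-1}$. Define the kernel $K(x):=\sum_{k\in\mathbb Z}|x+ke_1|^{-n-s}$ (with values in $(0,+\infty]$), and for a measurable $E\subseteq\mathbb R^n$ set $P_S(E):=\int_{E\cap S}\int_{S\setminus E}K(x-y)\,dx\,dy$. The class $\mathcal K$ consists of all sets $F=\{(x_1,x')\in S: |x'|\le f(x_1)\}$ where $f:[-1/2,1/2]\to[0,+\infty]$ is even and non-increasing on $[0,1/2]$. $|\cdot|$ denotes Lebesgue measure. *)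

theory Defs
  imports "HOL-Analysis.Analysis"
begin

text \<open>Points of R^n are written as pairs (x1, x') with x' in an abstract Euclidean
space 'a of dimension n-1 = DIM('a) >= 1, so n = DIM('a) + 1 >= 2 automatically.\<close>

definition dimn :: "'a::euclidean_space itself \<Rightarrow> real" where
  "dimn _ = real DIM('a) + 1"

definition strip :: "(real \<times> 'a::euclidean_space) set" where
  "strip = {x. fst x \<in> {-1/2..1/2}}"

definition kterm :: "real \<Rightarrow> real \<times> 'a::euclidean_space \<Rightarrow> ennreal" where
  "kterm s x = (if x = 0 then \<infinity> else ennreal (norm x powr (- (dimn TYPE('a) + s))))"

definition kernel :: "real \<Rightarrow> real \<times> 'a::euclidean_space \<Rightarrow> ennreal" where
  "kernel s x = (\<Sum>\<^sub>\<infinity>k::int. kterm s (x + (of_int k, 0)))"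

definition PS :: "real \<Rightarrow> (real \<times> 'a::euclidean_space) set \<Rightarrow> ennreal" where
  "PS s E = (\<integral>\<^sup>+ y. indicator (E \<inter> strip) y *
              (\<integral>\<^sup>+ x. indicator (strip - E) x * kernel s (x - y) \<partial>lebesgue) \<partial>lebesgue)"

definition classK :: "(real \<times> 'a::euclidean_space) set set" where
  "classK = {F. \<exists>f :: real \<Rightarrow> ereal.
      (\<forall>t\<in>{-1/2..1/2}. 0 \<le> f t \<and> f (-t) = f t) \<and>
      (\<forall>a b. 0 \<le> a \<longrightarrow> a \<le> b \<longrightarrow> b \<le> 1/2 \<longrightarrow> f b \<le> f a) \<and>
      F = {x. fst x \<in> {-1/2..1/2} \<and> ereal (norm (snd x)) \<le> f (fst x)}}"

end

theory Submission
  imports Defs "HOL-Library.Diagonal_Subsequence"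
begin

text \<open>
  The direct method. A set of \<open>K\<close> is \<open>{|x\<^sub>1| \<le> 1/2, |x'| \<le> g |x\<^sub>1|}\<close> for a nonnegative,
  nonincreasing profile \<open>g\<close> on \<open>[0, \<infinity>)\<close>. Monotone profiles are compact: a diagonal subsequence
  converges at all rationals, and the limit profile is continuous off a countable set, so the
  corresponding sets converge a.e. (away from countably many hyperplanes and the null graph
  \<open>|x'| = g |x\<^sub>1|\<close>). By Fatou, volume and \<open>P\<^sub>S\<close> are lower semicontinuous. Volume cannot
  escape to \<open>|x'| \<rightarrow> \<infinity>\<close>: if \<open>2 L |B\<^sub>R| = \<mu>\<close>, every point \<open>y\<close> of the set with \<open>|y'| > R\<close> lies over
  \<open>|y\<^sub>1| \<le> L\<close> and sees a box of volume \<open>\<sim> L\<^sup>n\<close> of the complement at distance \<open>\<le> 6 L\<close>, which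
  contributes \<open>\<ge> c L\<^sup>-\<^sup>s\<close> to \<open>P\<^sub>S\<close>. Hence the volume beyond \<open>R\<close> is \<open>\<le> L\<^sup>s P\<^sub>S / c\<close>, uniformly small
  along a minimizing sequence, and the limit set has volume \<open>\<mu>\<close>.
\<close>

section \<open>Profile sets\<close>

definition decreasing_profile :: "(real \<Rightarrow> ereal) \<Rightarrow> bool" where
  "decreasing_profile g \<longleftrightarrow> (\<forall>t\<ge>0. 0 \<le> g t) \<and> (\<forall>a b. 0 \<le> a \<longrightarrow> a \<le> b \<longrightarrow> g b \<le> g a)"

definition profile_set :: "(real \<Rightarrow> ereal) \<Rightarrow> (real \<times> 'a::euclidean_space) set" where
  "profile_set g = {x. \<bar>fst x\<bar> \<le> 1/2 \<and> ereal (norm (snd x)) \<le> g \<bar>fst x\<bar>}"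

lemma classK_iff_profile_set:
  "F \<in> classK \<longleftrightarrow> (\<exists>g. decreasing_profile g \<and> F = profile_set g)"
proof
  assume "F \<in> classK"
  then obtain f :: "real \<Rightarrow> ereal" where f1: "\<forall>t\<in>{-1/2..1/2}. 0 \<le> f t \<and> f (-t) = f t"
    and f2: "\<forall>a b. 0 \<le> a \<longrightarrow> a \<le> b \<longrightarrow> b \<le> 1/2 \<longrightarrow> f b \<le> f a"
    and F: "F = {x. fst x \<in> {-1/2..1/2} \<and> ereal (norm (snd x)) \<le> f (fst x)}"
    unfolding classK_def by blast
  define g where "g t = f (max 0 (min t (1/2)))" for t
  have "f t = g \<bar>t\<bar>" if "t \<in> {-1/2..1/2}" for t
    using that f1 unfolding g_def by (cases "t \<ge> 0") (auto simp: max_def min_def)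
  moreover have "fst x \<in> {-1/2..1/2} \<longleftrightarrow> \<bar>fst x\<bar> \<le> 1/2" for x :: "real \<times> 'a"
    by auto
  ultimately have "F = profile_set g"
    unfolding F profile_set_def by (metis (no_types, lifting))
  moreover have "decreasing_profile g"
    unfolding decreasing_profile_def g_def using f1 f2 by (auto simp: max_def min_def)
  ultimately show "\<exists>g. decreasing_profile g \<and> F = profile_set g" by blast
next
  assume "\<exists>g. decreasing_profile g \<and> F = profile_set g"
  then obtain g where g: "decreasing_profile g" and F: "F = profile_set g" by blast
  show "F \<in> classK"
    unfolding classK_def
  proof (intro CollectI exI[of _ "\<lambda>t. g \<bar>t\<bar>"] conjI)
    show "\<forall>t\<in>{- 1 / 2..1 / 2}. 0 \<le> g \<bar>t\<bar> \<and> g \<bar>- t\<bar> = g \<bar>t\<bar>"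
      "\<forall>a b. 0 \<le> a \<longrightarrow> a \<le> b \<longrightarrow> b \<le> 1 / 2 \<longrightarrow> g \<bar>b\<bar> \<le> g \<bar>a\<bar>"
      using g unfolding decreasing_profile_def by auto
    show "F = {x. fst x \<in> {- 1 / 2..1 / 2} \<and> ereal (norm (snd x)) \<le> g \<bar>fst x\<bar>}"
      unfolding F profile_set_def by (auto simp: abs_le_iff)
  qed
qed

lemma borel_measurable_antimono:
  fixes G :: "real \<Rightarrow> 'b::{linorder_topology, second_countable_topology}"
  assumes "antimono G"
  shows "G \<in> borel_measurable borel"
proof (rule borel_measurableI_greater)
  fix y
  have "is_interval {t. y < G t}"
    unfolding is_interval_1 using assms by (auto simp: antimono_def intro: less_le_trans)
  then show "{x \<in> space borel. y < G x} \<in> sets borel"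
    using real_interval_borel_measurable by simp
qed

lemma pred_borel_pair_measure:
  assumes "Measurable.pred (borel \<Otimes>\<^sub>M borel) P"
  shows "{x :: 'a::euclidean_space \<times> 'b::euclidean_space. P x} \<in> sets borel"
  using assms by (simp add: pred_def borel_prod)

lemma profile_set_borel:
  assumes "decreasing_profile g"
  shows "profile_set g \<in> sets (borel :: (real \<times> 'a::euclidean_space) measure)"
proof -
  define G where "G t = g (max 0 t)" for t
  have [measurable]: "G \<in> borel_measurable borel"
    unfolding G_def by (rule borel_measurable_antimono) (use assms in \<open>auto simp: antimono_def decreasing_profile_def\<close>)
  have "profile_set g = {x :: real \<times> 'a. \<bar>fst x\<bar> \<le> 1/2 \<and> ereal (norm (snd x)) \<le> G \<bar>fst x\<bar>}"
    unfolding profile_set_def G_def by auto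
  also have "\<dots> \<in> sets borel"
    by (rule pred_borel_pair_measure) measurable
  finally show ?thesis .
qed

lemma profile_set_subset_strip: "profile_set g \<subseteq> strip"
  unfolding profile_set_def strip_def by (auto simp: abs_le_iff)

lemma emeasure_lborel_Times:
  fixes A :: "'a::euclidean_space set" and B :: "'b::euclidean_space set"
  assumes "A \<in> sets borel" "B \<in> sets borel"
  shows "emeasure lborel (A \<times> B) = emeasure lborel A * emeasure lborel B"
proof -
  have "emeasure (lborel \<Otimes>\<^sub>M lborel) (A \<times> B) = emeasure lborel A * emeasure lborel B"
    using assms by (intro lborel.emeasure_pair_measure_Times) auto
  then show ?thesis by (simp add: lborel_prod)
qed

lemma countable_fst_null_sets:
  assumes "countable C"
  shows "{y :: 'a::euclidean_space \<times> 'b::euclidean_space. fst y \<in> C} \<in> null_sets lborel"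
proof -
  have C: "C \<in> sets borel" using assms by (simp add: sets.countable)
  have "{y :: 'a \<times> 'b. fst y \<in> C} = C \<times> UNIV" by auto
  moreover have "emeasure lborel C = 0"
    using assms by (simp add: emeasure_lborel_countable)
  ultimately show ?thesis
    using C emeasure_lborel_Times[OF C, of UNIV] by (auto simp: null_sets_def borel_Times)
qed

text \<open>Every section at fixed first coordinate is a sphere, hence null.\<close>

lemma norm_graph_null_sets:
  fixes h :: "'b::euclidean_space \<Rightarrow> ereal"
  assumes [measurable]: "h \<in> borel_measurable borel"
  shows "{y :: 'b \<times> 'a::euclidean_space. ereal (norm (snd y)) = h (fst y)} \<in> null_sets lborel"
proof -
  let ?X = "{y :: 'b \<times> 'a. ereal (norm (snd y)) = h (fst y)}"
  have X: "?X \<in> sets borel"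
    by (rule pred_borel_pair_measure) measurable
  have sphere: "Pair t -` ?X \<in> null_sets lborel" for t
  proof (cases "h t")
    case (real c)
    then have "Pair t -` ?X = sphere 0 c" by (auto simp: sphere_def)
    then show ?thesis
      using negligible_sphere[of "0::'a" c]
      by (simp add: negligible_iff_null_sets null_sets_completion_iff borel_closed)
  qed auto
  have "emeasure (lborel \<Otimes>\<^sub>M lborel) ?X = (\<integral>\<^sup>+ t. emeasure lborel (Pair t -` ?X) \<partial>lborel)"
    using X by (intro lborel.emeasure_pair_measure_alt) (metis borel_prod sets_lborel sets_pair_measure_cong)
  also have "\<dots> = 0" using sphere by (simp add: null_sets_def)
  finally show ?thesis using X by (simp add: null_sets_def lborel_prod)
qed

lemma kterm_borel [measurable]:
  "kterm s \<in> borel_measurable (borel :: (real \<times> 'a::euclidean_space) measure)"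
  unfolding kterm_def by measurable

lemma kernel_eq_SUP_finite: "kernel s x = (SUP F\<in>{F. finite F}. \<Sum>k\<in>F. kterm s (x + (of_int k, 0)))"
  unfolding kernel_def by (subst nonneg_infsum_complete) auto

lemma kernel_borel [measurable]:
  "kernel s \<in> borel_measurable (borel :: (real \<times> 'a::euclidean_space) measure)"
proof -
  have "(\<lambda>x :: real \<times> 'a. SUP F\<in>{F::int set. finite F}. \<Sum>k\<in>F. kterm s (x + (of_int k, 0)))
          \<in> borel_measurable borel"
    by (rule borel_measurable_SUP) (auto simp: countable_Collect_finite)
  then show ?thesis by (simp add: kernel_eq_SUP_finite[abs_def])
qed

lemma kterm_le_kernel: "kterm s x \<le> kernel s x"
proof -
  have "kterm s x = (\<Sum>k\<in>{0::int}. kterm s (x + (of_int k, 0)))"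
    by (simp add: zero_prod_def[symmetric])
  also have "\<dots> \<le> kernel s x"
    unfolding kernel_eq_SUP_finite by (rule SUP_upper) auto
  finally show ?thesis .
qed

lemma strip_borel [measurable]: "strip \<in> sets (borel :: (real \<times> 'a::euclidean_space) measure)"
  unfolding strip_def by (rule pred_borel_pair_measure) measurable

lemma PS_lborel:
  "PS s E = (\<integral>\<^sup>+ y. indicator (E \<inter> strip) y *
              (\<integral>\<^sup>+ x. indicator (strip - E) x * kernel s (x - y) \<partial>lborel) \<partial>lborel)"
  unfolding PS_def nn_integral_completion ..

lemma borel_measurable_kernel_integral [measurable]:
  assumes [measurable]: "A \<in> sets (borel :: (real \<times> 'a::euclidean_space) measure)"
  shows "(\<lambda>y :: real \<times> 'a. \<integral>\<^sup>+ x. indicator A x * kernel s (x - y) \<partial>lborel) \<in> borel_measurable borel"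
proof -
  have "(\<lambda>p :: (real \<times> 'a) \<times> (real \<times> 'a). indicator A (snd p) * kernel s (snd p - fst p))
          \<in> borel_measurable (lborel \<Otimes>\<^sub>M lborel)"
  proof -
    have "(\<lambda>p :: (real \<times> 'a) \<times> (real \<times> 'a). indicator A (snd p) * kernel s (snd p - fst p))
            \<in> borel_measurable (borel \<Otimes>\<^sub>M borel)"
      by measurable
    then show ?thesis
      by (simp add: measurable_def space_pair_measure sets_pair_measure_cong[OF sets_lborel sets_lborel])
  qed
  from lborel.borel_measurable_nn_integral_fst[OF this] show ?thesis by simp
qed

section \<open>Limits of sets converging almost everywhere\<close>

lemma liminf_eventually_const:
  fixes X :: "nat \<Rightarrow> 'b::complete_linorder"
  assumes "eventually (\<lambda>k. X k = c) sequentially"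
  shows "liminf X = c"
  using Liminf_eq[OF assms] by (simp add: Liminf_const)

lemma nn_integral_le_liminf_AE:
  assumes "\<And>k. u k \<in> borel_measurable M" and "AE x in M. v x \<le> liminf (\<lambda>k. u k x)"
  shows "(\<integral>\<^sup>+ x. v x \<partial>M) \<le> liminf (\<lambda>k. \<integral>\<^sup>+ x. u k x \<partial>M)"
  using nn_integral_mono_AE[OF assms(2)] nn_integral_liminf[OF assms(1)] by (rule order_trans)

lemma AE_le_liminf_eventually_eq:
  assumes "AE x in M. eventually (\<lambda>k. u k x = (v x :: 'c::complete_linorder)) sequentially"
  shows "AE x in M. v x \<le> liminf (\<lambda>k. u k x)"
  using assms by (rule eventually_mono) (simp add: liminf_eventually_const)

lemma emeasure_le_liminf_ae_eventually:
  fixes A :: "nat \<Rightarrow> 'b set"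
  assumes A: "\<And>k. A k \<in> sets M" and B: "B \<in> sets M"
    and lim: "AE x in M. eventually (\<lambda>k. x \<in> A k \<longleftrightarrow> x \<in> B) sequentially"
  shows "emeasure M B \<le> liminf (\<lambda>k. emeasure M (A k))"
proof -
  have "AE x in M. eventually (\<lambda>k. indicator (A k) x = (indicator B x :: ennreal)) sequentially"
    using lim by (rule eventually_mono) (auto elim: eventually_mono simp: indicator_def)
  then have "(\<integral>\<^sup>+ x. indicator B x \<partial>M) \<le> liminf (\<lambda>k. \<integral>\<^sup>+ x. indicator (A k) x \<partial>M)"
    using A by (intro nn_integral_le_liminf_AE AE_le_liminf_eventually_eq) auto
  then show ?thesis using A B by simp
qed

lemma tendsto_measure_Int_ae_eventually:
  fixes A :: "nat \<Rightarrow> 'b set"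
  assumes A: "\<And>k. A k \<in> sets M" and B: "B \<in> sets M"
    and C: "C \<in> sets M" "emeasure M C < \<infinity>"
    and lim: "AE x in M. eventually (\<lambda>k. x \<in> A k \<longleftrightarrow> x \<in> B) sequentially"
  shows "(\<lambda>k. measure M (A k \<inter> C)) \<longlonglongrightarrow> measure M (B \<inter> C)"
proof -
  have "(\<lambda>k. integral\<^sup>L M (indicator (A k \<inter> C) :: 'b \<Rightarrow> real))
          \<longlonglongrightarrow> integral\<^sup>L M (indicator (B \<inter> C))"
  proof (rule integral_dominated_convergence)
    show "integrable M (indicator C :: 'b \<Rightarrow> real)"
      using C by (simp add: less_top)
    show "AE x in M. (\<lambda>k. indicator (A k \<inter> C) x :: real) \<longlonglongrightarrow> indicator (B \<inter> C) x"
        using lim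
    proof (rule eventually_mono)
      fix x assume "eventually (\<lambda>k. x \<in> A k \<longleftrightarrow> x \<in> B) sequentially"
      then have "eventually (\<lambda>k. indicator (A k \<inter> C) x = (indicator (B \<inter> C) x :: real)) sequentially"
        by (rule eventually_mono) (simp add: indicator_def)
      then show "(\<lambda>k. indicator (A k \<inter> C) x :: real) \<longlonglongrightarrow> indicator (B \<inter> C) x"
        by (rule tendsto_eventually)
    qed
    show "AE x in M. norm (indicator (A k \<inter> C) x :: real) \<le> indicator C x" for k
      by (simp add: indicator_def)
  qed (use A B C in auto)
  then show ?thesis
    using A B C by (simp add: Int_absorb2 sets.sets_into_space le_infI2)
qed

lemma emeasure_ge_ae_eventually_tight:
  fixes A :: "nat \<Rightarrow> 'b set"
  assumes A: "\<And>k. A k \<in> sets M" "\<And>k. emeasure M (A k) = ennreal \<mu>" and B: "B \<in> sets M"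
    and lim: "AE x in M. eventually (\<lambda>k. x \<in> A k \<longleftrightarrow> x \<in> B) sequentially"
    and tight: "\<And>\<epsilon>. \<epsilon> > 0 \<Longrightarrow> \<exists>C\<in>sets M. emeasure M C < \<infinity> \<and>
                               eventually (\<lambda>k. measure M (A k - C) \<le> \<epsilon>) sequentially"
  shows "ennreal \<mu> \<le> emeasure M B"
proof (rule ennreal_le_epsilon)
  fix \<epsilon> :: real assume "0 < \<epsilon>"
  then obtain C where C: "C \<in> sets M" "emeasure M C < \<infinity>"
    and small: "eventually (\<lambda>k. measure M (A k - C) \<le> \<epsilon>) sequentially"
    using tight by blast
  have "\<mu> - \<epsilon> \<le> measure M (A k \<inter> C)" if "measure M (A k - C) \<le> \<epsilon>" for k
  proof -
    have Ak: "A k \<in> fmeasurable M" using A by (simp add: fmeasurable_def)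
    then have "A k \<inter> C \<in> fmeasurable M" using C(1) by (rule fmeasurable_Int_fmeasurable)
    from measure_Un2[OF this Ak]
    have "measure M (A k) = measure M (A k \<inter> C) + measure M (A k - C)"
      by (simp add: Un_absorb1 Diff_Int)
    moreover have "\<mu> \<le> measure M (A k)"
      using A(2)[of k] by (cases "0 \<le> \<mu>") (auto simp: measure_def ennreal_neg)
    ultimately show ?thesis using that by linarith
  qed
  with small have "eventually (\<lambda>k. \<mu> - \<epsilon> \<le> measure M (A k \<inter> C)) sequentially"
    by (auto elim: eventually_mono)
  then have "\<mu> - \<epsilon> \<le> measure M (B \<inter> C)"
    using tendsto_measure_Int_ae_eventually[OF A(1) B C lim]
    by (intro LIMSEQ_le_const) (auto simp: eventually_sequentially)
  then have "ennreal \<mu> \<le> ennreal (measure M (B \<inter> C)) + ennreal \<epsilon>"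
    using \<open>0 < \<epsilon>\<close> by (simp flip: ennreal_plus)
  also have "ennreal (measure M (B \<inter> C)) = emeasure M (B \<inter> C)"
    using B C emeasure_mono[of "B \<inter> C" C M]
    by (intro emeasure_eq_ennreal_measure[symmetric]) (auto simp: top_unique)
  also have "\<dots> \<le> emeasure M B" by (rule emeasure_mono) (use B in auto)
  finally show "ennreal \<mu> \<le> emeasure M B + ennreal \<epsilon>" by (simp add: add_right_mono)
qed

lemma PS_le_liminf_ae_eventually:
  fixes A :: "nat \<Rightarrow> (real \<times> 'a::euclidean_space) set"
  assumes A [measurable]: "\<And>k. A k \<in> sets borel" and B [measurable]: "B \<in> sets borel"
    and lim: "AE y in lborel. eventually (\<lambda>k. y \<in> A k \<longleftrightarrow> y \<in> B) sequentially"
  shows "PS s B \<le> liminf (\<lambda>k. PS s (A k))"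
proof -
  define J where "J E y = (\<integral>\<^sup>+ x. indicator (strip - E) x * kernel s (x - y) \<partial>lborel)"
    for E :: "(real \<times> 'a) set" and y
  have J_le: "J B y \<le> liminf (\<lambda>k. J (A k) y)" for y
  proof -
    have "AE x in lborel. eventually (\<lambda>k. indicator (strip - A k) x * kernel s (x - y)
                                   = indicator (strip - B) x * kernel s (x - y)) sequentially"
      using lim by (rule eventually_mono) (erule eventually_mono, simp add: indicator_def)
    then show ?thesis
      unfolding J_def by (intro nn_integral_le_liminf_AE AE_le_liminf_eventually_eq) auto
  qed
  have "AE y in lborel. indicator (B \<inter> strip) y * J B y
          \<le> liminf (\<lambda>k. indicator (A k \<inter> strip) y * J (A k) y)"
    using lim
  proof (rule eventually_mono)
    fix y assume ev: "eventually (\<lambda>k. y \<in> A k \<longleftrightarrow> y \<in> B) sequentially"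
    show "indicator (B \<inter> strip) y * J B y \<le> liminf (\<lambda>k. indicator (A k \<inter> strip) y * J (A k) y)"
    proof (cases "y \<in> B \<inter> strip")
      case True
      have "eventually (\<lambda>k. indicator (A k \<inter> strip) y * J (A k) y = J (A k) y) sequentially"
        using ev by (rule eventually_mono) (use True in \<open>simp add: indicator_def\<close>)
      then have "liminf (\<lambda>k. indicator (A k \<inter> strip) y * J (A k) y) = liminf (\<lambda>k. J (A k) y)"
        by (rule Liminf_eq)
      then show ?thesis using True J_le[of y] by simp
    qed simp
  qed
  then show ?thesis
    unfolding PS_lborel J_def[symmetric] by (intro nn_integral_le_liminf_AE) (auto simp: J_def)
qed

section \<open>Tightness\<close>

text \<open>Otherwise the profile set would contain the cylinder \<open>[-t, t] \<times> B\<^sub>r\<close>, of larger volume.\<close>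

lemma profile_less_of_emeasure_le:
  fixes g :: "real \<Rightarrow> ereal"
  assumes g: "decreasing_profile g" and R: "R > 0" and L: "0 < L" "L < 1/2"
    and meas: "emeasure lborel (profile_set g :: (real \<times> 'a::euclidean_space) set)
                 \<le> ennreal (2 * L * unit_ball_vol (real DIM('a)) * R ^ DIM('a))"
    and t: "t > L" and r: "r \<ge> R"
  shows "g t < ereal r"
proof (rule ccontr)
  assume "\<not> g t < ereal r"
  then have rg: "ereal r \<le> g t" by simp
  define t' where "t' = min t (1/2)"
  have t': "L < t'" "t' \<le> t" "t' \<le> 1/2" using t L unfolding t'_def by auto
  define V where "V = unit_ball_vol (real DIM('a))"
  have V: "V > 0" unfolding V_def by simp
  have sub: "{-t'..t'} \<times> ball (0::'a) r \<subseteq> profile_set g"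
  proof
    fix x :: "real \<times> 'a" assume "x \<in> {-t'..t'} \<times> ball 0 r"
    then have x: "\<bar>fst x\<bar> \<le> t'" "norm (snd x) < r" by (auto simp: dist_norm)
    have "g t \<le> g \<bar>fst x\<bar>" using g x t' unfolding decreasing_profile_def by auto
    then have "ereal (norm (snd x)) \<le> g \<bar>fst x\<bar>"
      using rg x by (meson ereal_less_eq(3) less_imp_le order_trans)
    then show "x \<in> profile_set g" using x t' unfolding profile_set_def by auto
  qed
  have "ennreal (2 * t' * V * r ^ DIM('a)) = emeasure lborel ({-t'..t'} \<times> ball (0::'a) r)"
    using t' L R r
    by (simp add: emeasure_lborel_Times emeasure_ball V_def ennreal_mult'[symmetric] mult.assoc)
  also have "\<dots> \<le> emeasure lborel (profile_set g :: (real \<times> 'a) set)"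
    using emeasure_mono[OF sub] profile_set_borel[OF g] by (metis sets_lborel)
  also have "\<dots> \<le> ennreal (2 * L * V * R ^ DIM('a))"
    using meas unfolding V_def .
  finally have le: "2 * t' * V * r ^ DIM('a) \<le> 2 * L * V * R ^ DIM('a)"
    using L R V by (subst (asm) ennreal_le_iff) auto
  have "2 * L * V < 2 * t' * V" using t' V by simp
  moreover have "R ^ DIM('a) \<le> r ^ DIM('a)" using R r by (auto intro: power_mono)
  ultimately have "2 * L * V * R ^ DIM('a) < 2 * t' * V * r ^ DIM('a)"
    by (rule mult_less_le_imp_less) (use L V R in auto)
  with le show False by simp
qed

text \<open>Under the volume bound above, a point \<open>y\<close> of the profile set with \<open>|y'| > R\<close> sees a
  box of side \<open>\<sim> L\<close> of the complement, placed radially outwards from \<open>y\<close> at distance \<open>\<sim> L\<close>.\<close>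

lemma box_outside_profile_set:
  fixes g :: "real \<Rightarrow> ereal" and y :: "real \<times> 'a::euclidean_space"
  assumes g: "decreasing_profile g" and R: "R > 0" and L: "0 < L" "L \<le> 1/4"
    and meas: "emeasure lborel (profile_set g :: (real \<times> 'a) set)
                 \<le> ennreal (2 * L * unit_ball_vol (real DIM('a)) * R ^ DIM('a))"
    and y: "y \<in> profile_set g" "R < norm (snd y)"
    and x: "x \<in> {L<..2*L} \<times> ball (snd y + (2 * L / norm (snd y)) *\<^sub>R snd y) (L/2)"
  shows "x \<in> strip - profile_set g" and "norm (x - y) \<le> 6 * L"
proof -
  define r where "r = norm (snd y)"
  define c where "c = snd y + (2 * L / r) *\<^sub>R snd y"
  have r: "R < r" using y r_def by simp
  have x1: "L < fst x" "fst x \<le> 2 * L" and x2: "norm (snd x - c) < L/2"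
    using x unfolding c_def r_def by (auto simp: dist_norm norm_minus_commute)
  have small: "g t < ereal r" if "L < t" for t
    using profile_less_of_emeasure_le[OF g R _ _ meas that, of r] L r by simp
  have y1: "\<bar>fst y\<bar> \<le> L"
    using small[of "\<bar>fst y\<bar>"] y(1) unfolding profile_set_def r_def by force
  have "norm ((1 + 2 * L / r) *\<^sub>R snd y) = \<bar>1 + 2 * L / r\<bar> * r"
    unfolding r_def by (rule norm_scaleR)
  also have "\<dots> = r + 2 * L" using r R L by (simp add: field_simps)
  finally have "norm ((1 + 2 * L / r) *\<^sub>R snd y) = r + 2 * L" .
  then have nc: "norm c = r + 2 * L" unfolding c_def by (simp add: algebra_simps)
  have cy: "norm (c - snd y) = 2 * L"
    using r R L unfolding c_def r_def by (auto simp: abs_of_pos)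
  have "norm c \<le> norm (snd x) + norm (snd x - c)" by (metis norm_triangle_sub norm_minus_commute)
  then have "ereal r < ereal (norm (snd x))" using nc x2 L by simp
  then have "g \<bar>fst x\<bar> < ereal (norm (snd x))"
    using small[of "\<bar>fst x\<bar>"] x1 by (auto intro: less_trans)
  then have "x \<notin> profile_set g" unfolding profile_set_def by (auto simp: not_le)
  moreover have "x \<in> strip" unfolding strip_def using x1 L by auto
  ultimately show "x \<in> strip - profile_set g" by simp
  have "norm (x - y) \<le> norm (fst x - fst y) + norm (snd x - snd y)"
    using norm_Pair_le[of "fst x - fst y" "snd x - snd y"] by (simp add: prod_eq_iff minus_prod_def)
  also have "norm (snd x - snd y) \<le> norm (snd x - c) + norm (c - snd y)"
    by (rule norm_diff_triangle_le) auto
  finally show "norm (x - y) \<le> 6 * L" using x1 y1 x2 cy by simp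
qed

lemma kernel_integral_ge_far_point:
  fixes g :: "real \<Rightarrow> ereal" and y :: "real \<times> 'a::euclidean_space"
  assumes g: "decreasing_profile g" and R: "R > 0" and L: "0 < L" "L \<le> 1/4"
    and meas: "emeasure lborel (profile_set g :: (real \<times> 'a) set)
                 \<le> ennreal (2 * L * unit_ball_vol (real DIM('a)) * R ^ DIM('a))"
    and y: "y \<in> profile_set g" "R < norm (snd y)" and s: "0 \<le> s"
  shows "ennreal ((6 * L) powr (- (dimn TYPE('a) + s)) * (L * (unit_ball_vol (real DIM('a)) * (L/2) ^ DIM('a))))
         \<le> (\<integral>\<^sup>+ x. indicator (strip - profile_set g) x * kernel s (x - y) \<partial>lborel)"
proof -
  define k where "k = (6 * L) powr (- (dimn TYPE('a) + s))"
  define Q where "Q = {L<..2*L} \<times> ball (snd y + (2 * L / norm (snd y)) *\<^sub>R snd y) (L/2)"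
  have pointwise: "ennreal k * indicator Q x \<le> indicator (strip - profile_set g) x * kernel s (x - y)" for x
  proof (cases "x \<in> Q")
    case True
    note box = box_outside_profile_set[OF g R L meas y True[unfolded Q_def]]
    have "x - y \<noteq> 0" using True y(1) L box(1) by (metis DiffD2 eq_iff_diff_eq_0)
    then have "ennreal k \<le> kterm s (x - y)"
      unfolding k_def kterm_def using L s box(2) by (auto simp: dimn_def intro!: ennreal_leI powr_mono2')
    also have "\<dots> \<le> kernel s (x - y)" by (rule kterm_le_kernel)
    finally show ?thesis using True box(1) by simp
  qed simp
  have "Q \<in> sets lborel" unfolding Q_def by (simp add: borel_Times)
  moreover have "emeasure lborel Q = ennreal (L * (unit_ball_vol (real DIM('a)) * (L/2) ^ DIM('a)))"
    unfolding Q_def using L by (simp add: emeasure_lborel_Times emeasure_ball ennreal_mult')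
  ultimately have "ennreal (k * (L * (unit_ball_vol (real DIM('a)) * (L/2) ^ DIM('a))))
                     = (\<integral>\<^sup>+ x. ennreal k * indicator Q x \<partial>lborel)"
    unfolding k_def by (simp add: nn_integral_cmult_indicator ennreal_mult')
  also have "\<dots> \<le> (\<integral>\<^sup>+ x. indicator (strip - profile_set g) x * kernel s (x - y) \<partial>lborel)"
    by (intro nn_integral_mono pointwise)
  finally show ?thesis unfolding k_def .
qed

lemma scaled_box_kernel_mass:
  fixes L e V :: real and d :: nat
  assumes "L > 0"
  shows "(6 * L) powr (- e) * (L * (V * (L/2) ^ d)) = 6 powr (- e) * V / 2 ^ d * L powr (real d + 1 - e)"
proof -
  have "(6 * L) powr (- e) = 6 powr (- e) * L powr (- e)"
    using assms by (simp add: powr_mult)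
  moreover have "L * (L/2) ^ d = L powr (real d + 1) / 2 ^ d"
    using assms by (simp add: powr_add powr_realpow power_divide)
  moreover have "L powr (- e) * L powr (real d + 1) = L powr (real d + 1 - e)"
    using assms by (simp add: powr_add[symmetric])
  ultimately show ?thesis
    by (simp add: field_simps) (metis (no_types, lifting) mult.assoc mult.commute)
qed

lemma PS_ge_tail:
  fixes g :: "real \<Rightarrow> ereal"
  assumes g: "decreasing_profile g" and R: "R > 0" and L: "0 < L" "L \<le> 1/4"
    and meas: "emeasure lborel (profile_set g :: (real \<times> 'a::euclidean_space) set)
                 \<le> ennreal (2 * L * unit_ball_vol (real DIM('a)) * R ^ DIM('a))"
    and s: "0 \<le> s"
  shows "ennreal (6 powr (- (dimn TYPE('a) + s)) * unit_ball_vol (real DIM('a)) / 2 ^ DIM('a) * L powr (- s))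
           * emeasure lborel (profile_set g \<inter> {y :: real \<times> 'a. R < norm (snd y)})
         \<le> PS s (profile_set g :: (real \<times> 'a) set)"
proof -
  define C where "C = 6 powr (- (dimn TYPE('a) + s)) * unit_ball_vol (real DIM('a)) / 2 ^ DIM('a) * L powr (- s)"
  have C: "(6 * L) powr (- (dimn TYPE('a) + s)) * (L * (unit_ball_vol (real DIM('a)) * (L/2) ^ DIM('a))) = C"
    unfolding C_def
    using scaled_box_kernel_mass[OF L(1), of "dimn TYPE('a) + s" "unit_ball_vol (real DIM('a))" "DIM('a)"]
    by (simp add: dimn_def)
  define T where "T = profile_set g \<inter> {y :: real \<times> 'a. R < norm (snd y)}"
  have "{y :: real \<times> 'a. R < norm (snd y)} \<in> sets borel"
    by (rule pred_borel_pair_measure) measurable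
  then have "T \<in> sets borel"
    unfolding T_def using profile_set_borel[OF g] by blast
  then have "ennreal C * emeasure lborel T = (\<integral>\<^sup>+ y. ennreal C * indicator T y \<partial>lborel)"
    by (intro nn_integral_cmult_indicator[symmetric]) simp
  also have "\<dots> \<le> (\<integral>\<^sup>+ y. indicator (profile_set g \<inter> strip) (y :: real \<times> 'a) *
                   (\<integral>\<^sup>+ x. indicator (strip - profile_set g) x * kernel s (x - y) \<partial>lborel) \<partial>lborel)"
    using kernel_integral_ge_far_point[OF g R L meas _ _ s] profile_set_subset_strip[of g]
    unfolding C[symmetric] T_def by (intro nn_integral_mono) (auto simp: indicator_def)
  finally show ?thesis unfolding C_def T_def PS_lborel .
qed

lemma profile_tail_uniformly_small:
  assumes s: "0 < s" and \<mu>: "0 < \<mu>" and \<epsilon>: "0 < \<epsilon>"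
  shows "\<exists>R>0. \<forall>g. decreasing_profile g \<longrightarrow>
           emeasure lborel (profile_set g :: (real \<times> 'a::euclidean_space) set) = ennreal \<mu> \<longrightarrow>
           PS s (profile_set g :: (real \<times> 'a) set) \<le> ennreal M \<longrightarrow>
           measure lborel (profile_set g \<inter> {y :: real \<times> 'a. R < norm (snd y)}) \<le> \<epsilon>"
proof -
  define d where "d = DIM('a)"
  define V where "V = unit_ball_vol (real d)"
  have V: "V > 0" unfolding V_def by simp
  define c where "c = 6 powr (- (dimn TYPE('a) + s)) * V / 2 ^ d"
  have c: "c > 0" unfolding c_def using V by simp
  define M' where "M' = max M 0 + 1"
  have M': "M' > 0" "M \<le> M'" unfolding M'_def by auto
  define L where "L = min (1/4) ((\<epsilon> * c / M') powr (1/s))"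
  have L: "0 < L" "L \<le> 1/4" unfolding L_def using \<epsilon> c M' by auto
  have "L powr s \<le> ((\<epsilon> * c / M') powr (1/s)) powr s"
    using L s unfolding L_def by (intro powr_mono2) auto
  also have "\<dots> = \<epsilon> * c / M'" using s \<epsilon> c M' by (simp add: powr_powr)
  finally have Ls: "L powr s \<le> \<epsilon> * c / M'" .
  define R where "R = root d (\<mu> / (2 * V * L))"
  have d: "d > 0" unfolding d_def by simp
  have R: "R > 0" unfolding R_def using \<mu> V L d by simp
  have \<mu>_eq: "\<mu> = 2 * L * V * R ^ d" unfolding R_def using \<mu> V L d by simp
  show ?thesis
  proof (intro exI[of _ R] conjI allI impI R)
    fix g assume g: "decreasing_profile g"
      and meas: "emeasure lborel (profile_set g :: (real \<times> 'a) set) = ennreal \<mu>"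
      and PS: "PS s (profile_set g :: (real \<times> 'a) set) \<le> ennreal M"
    define T where "T = profile_set g \<inter> {y :: real \<times> 'a. R < norm (snd y)}"
    have "emeasure lborel T \<le> emeasure lborel (profile_set g :: (real \<times> 'a) set)"
      unfolding T_def using profile_set_borel[OF g] by (intro emeasure_mono) auto
    then have T_fin: "emeasure lborel T = ennreal (measure lborel T)"
      using meas by (intro emeasure_eq_ennreal_measure) (auto simp: top_unique)
    have "ennreal (c * L powr (- s)) * emeasure lborel T \<le> PS s (profile_set g :: (real \<times> 'a) set)"
      using PS_ge_tail[OF g R L _ less_imp_le[OF s], where 'a='a] meas \<mu>_eq
      unfolding c_def T_def V_def d_def by simp
    also have "\<dots> \<le> ennreal M'" using PS M' by (meson ennreal_leI order_trans)
    finally have "c * L powr (- s) * measure lborel T \<le> M'"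
      using c L M' by (simp add: T_fin ennreal_mult flip: ennreal_le_iff)
    then have "measure lborel T \<le> M' * L powr s / c"
      using c L by (simp add: powr_minus field_simps)
    also have "\<dots> \<le> \<epsilon>" using Ls M' c by (simp add: field_simps)
    finally show "measure lborel T \<le> \<epsilon>" .
  qed
qed

section \<open>Compactness of monotone profiles\<close>

lemma subseq_convergent_on_countable:
  fixes f :: "nat \<Rightarrow> 'b \<Rightarrow> 'c::{complete_linorder, linorder_topology}"
  assumes "countable C"
  shows "\<exists>\<sigma>. strict_mono \<sigma> \<and> (\<forall>q\<in>C. convergent (\<lambda>k. f (\<sigma> k) q))"
proof (cases "C = {}")
  case True
  then show ?thesis using strict_mono_id by blast
next
  case False
  define r where "r = from_nat_into C"
  have r_onto: "\<exists>n. r n = q" if "q \<in> C" for q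
    using from_nat_into_to_nat_on[OF assms that] unfolding r_def by blast
  let ?P = "\<lambda>n \<sigma>. convergent (\<lambda>k. f (\<sigma> k) (r n))"
  interpret subseqs ?P
  proof (unfold convergent_def subseqs_def, intro allI impI)
    fix n and \<sigma> :: "nat \<Rightarrow> nat"
    obtain l \<tau> where "strict_mono \<tau>" "((\<lambda>k. f (\<sigma> k) (r n)) \<circ> \<tau>) \<longlonglongrightarrow> l"
      using compact_complete_linorder[of "\<lambda>k. f (\<sigma> k) (r n)"] by blast
    then show "\<exists>\<tau>. strict_mono \<tau> \<and> (\<exists>l. (\<lambda>k. f ((\<sigma> \<circ> \<tau>) k) (r n)) \<longlonglongrightarrow> l)"
      by (auto simp: comp_def)
  qed
  have "?P n diagseq" for n
  proof -
    have "(\<lambda>k. f ((seqseq (Suc n) \<circ> (\<lambda>k. fold_reduce (Suc n) k (Suc n + k))) k) (r n))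
            = (\<lambda>k. f (seqseq (Suc n) k) (r n)) \<circ> (\<lambda>k. fold_reduce (Suc n) k (Suc n + k))"
      by auto
    then have "?P n (diagseq \<circ> ((+) (Suc n)))"
      unfolding diagseq_seqseq
      by (simp only:) (intro convergent_subseq_convergent seqseq_holds subseq_diagonal_rest)
    then obtain l where "(\<lambda>m. f (diagseq (m + Suc n)) (r n)) \<longlonglongrightarrow> l"
      by (auto simp: add.commute dest: convergentD)
    then have "(\<lambda>k. f (diagseq k) (r n)) \<longlonglongrightarrow> l" by (rule LIMSEQ_offset)
    then show ?thesis by (auto simp: convergent_def)
  qed
  then show ?thesis using subseq_diagseq r_onto by blast
qed

lemma countable_gap_set:
  fixes f g :: "real \<Rightarrow> ereal"
  assumes "\<And>a b. a \<in> S \<Longrightarrow> b \<in> S \<Longrightarrow> a < b \<Longrightarrow> g b \<le> f a"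
  shows "countable {t\<in>S. f t < g t}"
proof -
  let ?D = "{t\<in>S. f t < g t}"
  have "\<exists>\<rho>\<in>\<rat>. f t < ereal \<rho> \<and> ereal \<rho> < g t" if "t \<in> ?D" for t
  proof -
    from that obtain a where a: "f t < ereal a" "ereal a < g t" using ereal_dense2 by blast
    then obtain b where b: "ereal a < ereal b" "ereal b < g t" using ereal_dense2 by blast
    then obtain c where "c \<in> \<rat>" "a < c" "c < b" using Rats_dense_in_real[of a b] by auto
    moreover have "f t < ereal c" using less_trans[OF a(1), of "ereal c"] \<open>a < c\<close> by simp
    moreover have "ereal c < g t" using less_trans[OF _ b(2), of "ereal c"] \<open>c < b\<close> by simp
    ultimately show ?thesis by blast
  qed
  then obtain \<rho> where \<rho>: "\<And>t. t \<in> ?D \<Longrightarrow> \<rho> t \<in> \<rat> \<and> f t < ereal (\<rho> t) \<and> ereal (\<rho> t) < g t"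
    by metis
  have lt: "\<rho> b < \<rho> a" if "a \<in> ?D" "b \<in> ?D" "a < b" for a b
  proof -
    have "ereal (\<rho> b) < g b" using \<rho>[OF that(2)] by simp
    also have "g b \<le> f a" using assms that by blast
    also have "f a < ereal (\<rho> a)" using \<rho>[OF that(1)] by simp
    finally show ?thesis by simp
  qed
  have "inj_on \<rho> ?D"
  proof (rule inj_onI)
    fix a b assume "a \<in> ?D" "b \<in> ?D" "\<rho> a = \<rho> b"
    with lt[of a b] lt[of b a] show "a = b" by (cases a b rule: linorder_cases) auto
  qed
  moreover have "\<rho> ` ?D \<subseteq> \<rat>" using \<rho> by blast
  ultimately show ?thesis
    using countable_subset[OF _ countable_rat] countable_image_inj_on by blast
qed

definition rat_right_limit :: "(real \<Rightarrow> ereal) \<Rightarrow> real \<Rightarrow> ereal" where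
  "rat_right_limit L t = (SUP q\<in>{q\<in>\<rat>. t < q}. L q)"

definition rat_left_limit :: "(real \<Rightarrow> ereal) \<Rightarrow> real \<Rightarrow> ereal" where
  "rat_left_limit L t = (INF q\<in>{q\<in>\<rat>. 0 < q \<and> q < t}. L q)"

lemma decreasing_profile_rat_right_limit:
  assumes "\<And>q. q \<in> \<rat> \<Longrightarrow> 0 \<le> q \<Longrightarrow> 0 \<le> L q"
  shows "decreasing_profile (rat_right_limit L)"
  unfolding decreasing_profile_def
proof (intro conjI allI impI)
  fix t :: real assume "0 \<le> t"
  obtain q where q: "q \<in> \<rat>" "t < q" "q < t + 1" using Rats_dense_in_real[of t "t + 1"] by auto
  have "0 \<le> L q" using q \<open>0 \<le> t\<close> assms by simp
  also have "L q \<le> rat_right_limit L t" unfolding rat_right_limit_def using q by (intro SUP_upper) auto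
  finally show "0 \<le> rat_right_limit L t" .
next
  fix a b :: real assume "0 \<le> a" "a \<le> b"
  then show "rat_right_limit L b \<le> rat_right_limit L a"
    unfolding rat_right_limit_def by (intro SUP_subset_mono) auto
qed

lemma countable_rat_limit_gaps:
  "countable {t \<in> {0<..}. rat_right_limit L t < rat_left_limit L t}"
proof (rule countable_gap_set)
  fix a b :: real assume "a \<in> {0<..}" "a < b"
  then obtain q where q: "q \<in> \<rat>" "a < q" "q < b" "0 < q"
    using Rats_dense_in_real[of a b] by auto
  then have "rat_left_limit L b \<le> L q"
    unfolding rat_left_limit_def by (intro INF_lower) auto
  also have "L q \<le> rat_right_limit L a"
    unfolding rat_right_limit_def using q by (intro SUP_upper) auto
  finally show "rat_left_limit L b \<le> rat_right_limit L a" .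
qed

text \<open>The hypothesis \<open>rat_left_limit L t \<le> rat_right_limit L t\<close> says that \<open>t\<close> is a continuity point
  of the limit profile.\<close>

lemma eventually_le_iff_rat_right_limit:
  fixes h :: "nat \<Rightarrow> real \<Rightarrow> ereal"
  assumes h: "\<And>k. decreasing_profile (h k)"
    and lim: "\<And>q. q \<in> \<rat> \<Longrightarrow> (\<lambda>k. h k q) \<longlonglongrightarrow> L q"
    and t: "0 < t" and cont: "rat_left_limit L t \<le> rat_right_limit L t"
    and c: "c \<noteq> rat_right_limit L t"
  shows "eventually (\<lambda>k. c \<le> h k t \<longleftrightarrow> c \<le> rat_right_limit L t) sequentially"
proof (cases "c < rat_right_limit L t")
  case True
  then obtain q where q: "q \<in> \<rat>" "t < q" "c < L q"
    unfolding rat_right_limit_def by (auto simp: less_SUP_iff)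
  then have "eventually (\<lambda>k. c < h k q) sequentially"
    using lim[OF q(1)] by (simp add: order_tendsto_iff)
  then show ?thesis
  proof (rule eventually_mono)
    fix k assume "c < h k q"
    moreover have "h k q \<le> h k t" using h[of k] q t unfolding decreasing_profile_def by auto
    ultimately show "c \<le> h k t \<longleftrightarrow> c \<le> rat_right_limit L t" using True by (auto simp: less_imp_le)
  qed
next
  case False
  with c have gt: "rat_right_limit L t < c" by simp
  with cont have "rat_left_limit L t < c" by simp
  then obtain q where q: "q \<in> \<rat>" "0 < q" "q < t" "L q < c"
    unfolding rat_left_limit_def by (auto simp: INF_less_iff)
  then have "eventually (\<lambda>k. h k q < c) sequentially"
    using lim[OF q(1)] by (simp add: order_tendsto_iff)
  then show ?thesis
  proof (rule eventually_mono)
    fix k assume "h k q < c"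
    moreover have "h k t \<le> h k q" using h[of k] q unfolding decreasing_profile_def by auto
    ultimately have "h k t < c" by simp
    with gt show "c \<le> h k t \<longleftrightarrow> c \<le> rat_right_limit L t" by (simp add: not_le[symmetric])
  qed
qed

lemma decreasing_profiles_subseq_ae_limit:
  fixes g :: "nat \<Rightarrow> real \<Rightarrow> ereal"
  assumes g: "\<And>k. decreasing_profile (g k)"
  shows "\<exists>\<sigma> f. strict_mono \<sigma> \<and> decreasing_profile f \<and>
     (AE y in lborel. eventually (\<lambda>k. y \<in> (profile_set (g (\<sigma> k)) :: (real \<times> 'a::euclidean_space) set)
                                         \<longleftrightarrow> y \<in> profile_set f) sequentially)"
proof -
  obtain \<sigma> where \<sigma>: "strict_mono \<sigma>" and conv: "\<forall>q\<in>\<rat>. convergent (\<lambda>k. g (\<sigma> k) q)"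
    using subseq_convergent_on_countable[OF countable_rat, of g] by blast
  define L where "L q = lim (\<lambda>k. g (\<sigma> k) q)" for q
  have lim: "(\<lambda>k. g (\<sigma> k) q) \<longlonglongrightarrow> L q" if "q \<in> \<rat>" for q
    using conv that unfolding L_def by (simp add: convergent_LIMSEQ_iff)
  have "0 \<le> L q" if "q \<in> \<rat>" "0 \<le> q" for q
    using lim[OF that(1)] g that(2) unfolding decreasing_profile_def by (intro LIMSEQ_le_const) auto
  then have f: "decreasing_profile (rat_right_limit L)"
    by (rule decreasing_profile_rat_right_limit)
  have "antimono (rat_right_limit L)"
    unfolding antimono_def rat_right_limit_def by (auto intro: SUP_subset_mono)
  then have [measurable]: "rat_right_limit L \<in> borel_measurable borel"
    by (rule borel_measurable_antimono)
  define D where "D = {t \<in> {0<..}. rat_right_limit L t < rat_left_limit L t}"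
  define N where "N = {y :: real \<times> 'a. fst y \<in> {0} \<union> D \<union> uminus ` D}
                    \<union> {y. ereal (norm (snd y)) = rat_right_limit L \<bar>fst y\<bar>}"
  have N: "N \<in> null_sets lborel"
    unfolding N_def using countable_rat_limit_gaps[of L]
    by (intro null_sets.Un countable_fst_null_sets norm_graph_null_sets) (auto simp: D_def)
  have ev: "eventually (\<lambda>k. y \<in> profile_set (g (\<sigma> k)) \<longleftrightarrow> y \<in> profile_set (rat_right_limit L))
              sequentially" if "y \<notin> N" for y :: "real \<times> 'a"
  proof -
    have "\<bar>fst y\<bar> \<notin> D" "0 < \<bar>fst y\<bar>"
      using that unfolding N_def by (auto simp: abs_if image_iff intro: bexI[of _ "- fst y"])
    then have "eventually (\<lambda>k. ereal (norm (snd y)) \<le> g (\<sigma> k) \<bar>fst y\<bar>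
                 \<longleftrightarrow> ereal (norm (snd y)) \<le> rat_right_limit L \<bar>fst y\<bar>) sequentially"
      using that g lim unfolding N_def D_def
      by (intro eventually_le_iff_rat_right_limit) (auto simp: not_less)
    then show ?thesis by (rule eventually_mono) (simp add: profile_set_def)
  qed
  have "AE y in lborel. eventually (\<lambda>k. y \<in> (profile_set (g (\<sigma> k)) :: (real \<times> 'a) set)
          \<longleftrightarrow> y \<in> profile_set (rat_right_limit L)) sequentially"
    using N by (rule AE_I') (use ev in auto)
  with \<sigma> f show ?thesis by blast
qed


section \<open>Existence of a minimizer\<close>

lemma emeasure_lebesgue_profile_set:
  assumes "decreasing_profile g"
  shows "emeasure lebesgue (profile_set g :: (real \<times> 'a::euclidean_space) set)
           = emeasure lborel (profile_set g :: (real \<times> 'a) set)"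
  using profile_set_borel[OF assms, where 'a='a] by simp

lemma cylinder_in_classK:
  assumes "0 \<le> \<mu>"
  shows "\<exists>F \<in> (classK :: (real \<times> 'a::euclidean_space) set set). emeasure lebesgue F = ennreal \<mu>"
proof -
  define V where "V = unit_ball_vol (real DIM('a))"
  have V: "V > 0" unfolding V_def by simp
  define \<rho> where "\<rho> = root DIM('a) (\<mu> / V)"
  have \<rho>: "0 \<le> \<rho>" "\<rho> ^ DIM('a) = \<mu> / V" unfolding \<rho>_def using V assms by auto
  have h: "decreasing_profile (\<lambda>_. ereal \<rho>)" unfolding decreasing_profile_def using \<rho> by auto
  have "(profile_set (\<lambda>_. ereal \<rho>) :: (real \<times> 'a) set) = {-1/2..1/2} \<times> cball 0 \<rho>"
    by (auto simp: profile_set_def abs_le_iff)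
  then have "emeasure lborel (profile_set (\<lambda>_. ereal \<rho>) :: (real \<times> 'a) set) = ennreal \<mu>"
    using \<rho> V by (simp add: emeasure_lborel_Times emeasure_cball flip: V_def)
  then have "emeasure lebesgue (profile_set (\<lambda>_. ereal \<rho>) :: (real \<times> 'a) set) = ennreal \<mu>"
    by (simp add: emeasure_lebesgue_profile_set[OF h])
  then show ?thesis using h classK_iff_profile_set by blast
qed

lemma minimizing_profile_sequence:
  fixes \<mu> s :: real
  assumes "F0 \<in> (classK :: (real \<times> 'a::euclidean_space) set set)" "emeasure lebesgue F0 = ennreal \<mu>"
  shows "\<exists>g. (\<forall>k. decreasing_profile (g k) \<and>
                  emeasure lborel (profile_set (g k) :: (real \<times> 'a) set) = ennreal \<mu>) \<and>
             (\<lambda>k. PS s (profile_set (g k) :: (real \<times> 'a) set))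
               \<longlonglongrightarrow> (INF F \<in> {F \<in> classK. emeasure lebesgue F = ennreal \<mu>}. PS s (F :: (real \<times> 'a) set))"
proof -
  let ?Adm = "{F \<in> (classK :: (real \<times> 'a) set set). emeasure lebesgue F = ennreal \<mu>}"
  obtain u where u: "\<And>k. u k \<in> PS s ` ?Adm" and lim: "u \<longlonglongrightarrow> Inf (PS s ` ?Adm)"
    using Inf_as_limit[of "PS s ` ?Adm"] assms by blast
  have "\<exists>h. decreasing_profile h \<and> emeasure lborel (profile_set h :: (real \<times> 'a) set) = ennreal \<mu>
              \<and> PS s (profile_set h :: (real \<times> 'a) set) = u k" for k
    using u[of k] by (auto simp: classK_iff_profile_set emeasure_lebesgue_profile_set)
  then obtain g where "\<And>k. decreasing_profile (g k) \<and>
      emeasure lborel (profile_set (g k) :: (real \<times> 'a) set) = ennreal \<mu> \<and>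
      PS s (profile_set (g k) :: (real \<times> 'a) set) = u k"
    by metis
  with lim show ?thesis by (intro exI[of _ g]) auto
qed

lemma profile_sequence_tight:
  fixes g :: "nat \<Rightarrow> real \<Rightarrow> ereal"
  assumes s: "0 < s" and \<mu>: "0 < \<mu>" and \<epsilon>: "0 < \<epsilon>" and g: "\<And>k. decreasing_profile (g k)"
    and meas: "\<And>k. emeasure lborel (profile_set (g k) :: (real \<times> 'a::euclidean_space) set) = ennreal \<mu>"
    and bounded: "eventually (\<lambda>k. PS s (profile_set (g k) :: (real \<times> 'a) set) \<le> ennreal M) sequentially"
  shows "\<exists>C\<in>sets (lborel :: (real \<times> 'a) measure). emeasure lborel C < \<infinity> \<and>
           eventually (\<lambda>k. measure lborel (profile_set (g k) - C) \<le> \<epsilon>) sequentially"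
proof -
  obtain R where tail: "\<And>h. decreasing_profile h \<Longrightarrow>
      emeasure lborel (profile_set h :: (real \<times> 'a) set) = ennreal \<mu> \<Longrightarrow>
      PS s (profile_set h :: (real \<times> 'a) set) \<le> ennreal M \<Longrightarrow>
      measure lborel (profile_set h \<inter> {y :: real \<times> 'a. R < norm (snd y)}) \<le> \<epsilon>"
    using profile_tail_uniformly_small[OF s \<mu> \<epsilon>, of M, where 'a='a] by auto
  define C where "C = {-1/2..1/2 :: real} \<times> cball (0::'a) R"
  have tail_C: "profile_set h - C = profile_set h \<inter> {y :: real \<times> 'a. R < norm (snd y)}" for h
    unfolding C_def by (auto simp: profile_set_def)
  from bounded have "eventually (\<lambda>k. measure lborel (profile_set (g k) - C) \<le> \<epsilon>) sequentially"
    by (rule eventually_mono) (simp add: tail_C tail g meas)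
  moreover have "C \<in> sets lborel" unfolding C_def by (simp add: borel_Times)
  moreover have "emeasure lborel C < \<infinity>"
    unfolding C_def by (intro emeasure_compact_finite compact_Times compact_Icc compact_cball)
  ultimately show ?thesis by blast
qed

lemma minimizing_profiles_limit:
  fixes g :: "nat \<Rightarrow> real \<Rightarrow> ereal"
  assumes s: "0 < s" and \<mu>: "0 < \<mu>" and g: "\<And>k. decreasing_profile (g k)"
    and meas: "\<And>k. emeasure lborel (profile_set (g k) :: (real \<times> 'a::euclidean_space) set) = ennreal \<mu>"
    and lim: "(\<lambda>k. PS s (profile_set (g k) :: (real \<times> 'a) set)) \<longlonglongrightarrow> m" and m: "m \<noteq> \<infinity>"
  shows "\<exists>f. decreasing_profile f \<and> emeasure lborel (profile_set f :: (real \<times> 'a) set) = ennreal \<mu>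
             \<and> PS s (profile_set f :: (real \<times> 'a) set) \<le> m"
proof -
  obtain \<sigma> f where \<sigma>: "strict_mono \<sigma>" and f: "decreasing_profile f"
    and ae: "AE y in lborel. eventually (\<lambda>k. y \<in> (profile_set (g (\<sigma> k)) :: (real \<times> 'a) set)
                                              \<longleftrightarrow> y \<in> profile_set f) sequentially"
    using decreasing_profiles_subseq_ae_limit[of g, OF g, where 'a='a] by blast
  note sets = profile_set_borel[OF g, where 'a='a] profile_set_borel[OF f, where 'a='a]
  have lim_\<sigma>: "(\<lambda>k. PS s (profile_set (g (\<sigma> k)) :: (real \<times> 'a) set)) \<longlonglongrightarrow> m"
    using LIMSEQ_subseq_LIMSEQ[OF lim \<sigma>] by (simp add: comp_def)
  have "PS s (profile_set f :: (real \<times> 'a) set) \<le> liminf (\<lambda>k. PS s (profile_set (g (\<sigma> k)) :: (real \<times> 'a) set))"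
    using sets by (intro PS_le_liminf_ae_eventually ae) auto
  also have "\<dots> = m" using lim_\<sigma> by (intro lim_imp_Liminf) auto
  finally have PS: "PS s (profile_set f :: (real \<times> 'a) set) \<le> m" .
  have "emeasure lborel (profile_set f :: (real \<times> 'a) set)
          \<le> liminf (\<lambda>k. emeasure lborel (profile_set (g (\<sigma> k)) :: (real \<times> 'a) set))"
    using sets by (intro emeasure_le_liminf_ae_eventually ae) auto
  then have le: "emeasure lborel (profile_set f :: (real \<times> 'a) set) \<le> ennreal \<mu>"
    by (simp add: meas Liminf_const)
  define M where "M = enn2real m + 1"
  have "m < ennreal M" using m unfolding M_def by (cases m) (auto simp: ennreal_less_iff)
  with lim_\<sigma> have "eventually (\<lambda>k. PS s (profile_set (g (\<sigma> k)) :: (real \<times> 'a) set) < ennreal M) sequentially"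
    by (rule order_tendstoD(2))
  then have bounded: "eventually (\<lambda>k. PS s (profile_set (g (\<sigma> k)) :: (real \<times> 'a) set) \<le> ennreal M) sequentially"
    by (rule eventually_mono) simp
  have "ennreal \<mu> \<le> emeasure lborel (profile_set f :: (real \<times> 'a) set)"
    using sets meas ae profile_sequence_tight[OF s \<mu> _ _ _ bounded] g meas
    by (intro emeasure_ge_ae_eventually_tight[where A = "\<lambda>k. profile_set (g (\<sigma> k))"]) auto
  with le PS f show ?thesis by (intro exI[of _ f]) auto
qed

theorem theorem1p1:
  fixes s \<mu> :: real
  assumes "0 < s" and "s < 1" and "0 < \<mu>"
  shows "\<exists>Fs \<in> (classK :: (real \<times> 'a::euclidean_space) set set).
           emeasure lebesgue Fs = ennreal \<mu> \<and>
           (\<forall>F \<in> (classK :: (real \<times> 'a) set set). emeasure lebesgue F = ennreal \<mu> \<longrightarrow> PS s Fs \<le> PS s F)"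
proof -
  define Adm where "Adm = {F \<in> (classK :: (real \<times> 'a) set set). emeasure lebesgue F = ennreal \<mu>}"
  define m where "m = (INF F\<in>Adm. PS s F)"
  obtain F0 where F0: "F0 \<in> Adm"
    using cylinder_in_classK[of \<mu>] assms(3) unfolding Adm_def by auto
  obtain g where g: "\<And>k. decreasing_profile (g k)"
      "\<And>k. emeasure lborel (profile_set (g k) :: (real \<times> 'a) set) = ennreal \<mu>"
    and lim: "(\<lambda>k. PS s (profile_set (g k) :: (real \<times> 'a) set)) \<longlonglongrightarrow> m"
    using minimizing_profile_sequence[of F0 \<mu> s] F0 unfolding Adm_def m_def by auto
  have "\<exists>Fs\<in>Adm. PS s Fs \<le> m"
  proof (cases "m = \<infinity>")
    case True
    with F0 show ?thesis by auto
  next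
    case False
    then obtain f where "decreasing_profile f" "PS s (profile_set f :: (real \<times> 'a) set) \<le> m"
        "emeasure lborel (profile_set f :: (real \<times> 'a) set) = ennreal \<mu>"
      using minimizing_profiles_limit[OF assms(1,3) g lim] by blast
    then show ?thesis
      unfolding Adm_def by (auto simp: classK_iff_profile_set emeasure_lebesgue_profile_set)
  qed
  then obtain Fs where Fs: "Fs \<in> Adm" "PS s Fs \<le> m" by blast
  have "PS s Fs \<le> PS s F" if "F \<in> Adm" for F
    using Fs(2) INF_lower[OF that, of "PS s"] unfolding m_def by (rule order_trans)
  with Fs(1) show ?thesis unfolding Adm_def by blast
qed

end
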